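(* Suppose that for every agent $i$ and every date $n$, the period utility $u_{in}$ is twice continuously differentiable on $\mathbb R_{++}$, satisfies $u_{in}'(x)>0$ and $u_{in}''(x)<0$ for every $x>0$, and satisfies $\lim_{x\to 0}u_{in}'(x)=+\infty$. Let $(\bar p,\bar x)$ be a competitive equilibrium of $\mathcal E^{N,\beta}$. Then for each agent $i\in I_N$ and each $m,n=1,\dots,N$, $$\frac{d\xi_{in}}{dp_m}(\bar p)=S_i(m,n)+M_i(m,n),$$ where $$S_i(m,n):=\frac{\bar r_{im}\bar r_{in}}{\bar r_i}-\frac{\bar r_{in}}{\bar p_n}\mathbf 1_{\{m=n\}},\qquad M_i(m,n):=\frac{\bar r_{in}}{\bar r_i}(\omega_{im}-\bar x_{im}).$$ Here $\bar r_{in}:=\frac{u_{in}'(\bar x_{in})}{-u_{in}''(\bar x_{in})}$ and $\bar r_i:=\bar r_{i0}+\sum_{n=1}^N\bar p_n\bar r_{in}$.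
   Context: $\mathcal E^{N,\beta}$ is a finite exchange economy with agents $I_N$ and dated commodities $0,1,\dots,N$. Agent $i$ has utility $U_i(x_i)=\sum_{n=0}^N\beta^n u_{in}(x_{in})$, $\beta\in(0,1)$, and endowment $\omega_i\in\mathbb R_+^{N+1}$. The price of commodity $0$ is one and $p=(p_1,\dots,p_N)$ are future prices; agent $i$ maximizes $U_i$ subject to $x_{i0}+\sum_{n=1}^N p_nx_{in}\le\omega_{i0}+\sum_{n=1}^N p_n\omega_{in}$, with Marshallian demand $\xi_i(p)$ (wealth evaluated at the endowment, so $d/dp_m$ is the total derivative including the endowment-wealth effect). A competitive equilibrium $(\bar p,\bar x)$ satisfies market clearing for future goods and $\bar x_i=\xi_i(\bar p)$. *)

theory Defs
  imports "HOL-Analysis.Analysis"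
begin

(* Commodities are dated 0..N; a bundle is a function
  nat => real, relevant on 0..N. Prices: p :: nat => real, only p 1..p N are used;
  the price of commodity 0 is normalised to one. *)

definition budget :: "nat \<Rightarrow> (nat \<Rightarrow> real) \<Rightarrow> (nat \<Rightarrow> real) \<Rightarrow> (nat \<Rightarrow> real) \<Rightarrow> bool" where
  "budget N p w x \<longleftrightarrow>
     x 0 + (\<Sum>n=1..N. p n * x n) \<le> w 0 + (\<Sum>n=1..N. p n * w n)"

(* Admissible consumption bundles: strictly positive in every date 0..N
  (the period utilities are only defined on the positive reals), zero beyond N. *)
definition admissible :: "nat \<Rightarrow> (nat \<Rightarrow> real) \<Rightarrow> bool" where
  "admissible N x \<longleftrightarrow> (\<forall>n\<le>N. 0 < x n) \<and> (\<forall>n>N. x n = 0)"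

definition util :: "nat \<Rightarrow> real \<Rightarrow> (nat \<Rightarrow> real \<Rightarrow> real) \<Rightarrow> (nat \<Rightarrow> real) \<Rightarrow> real" where
  "util N \<beta> ui x = (\<Sum>n=0..N. \<beta> ^ n * ui n (x n))"

definition is_demand ::
  "nat \<Rightarrow> real \<Rightarrow> (nat \<Rightarrow> real \<Rightarrow> real) \<Rightarrow> (nat \<Rightarrow> real) \<Rightarrow> (nat \<Rightarrow> real) \<Rightarrow> (nat \<Rightarrow> real) \<Rightarrow> bool" where
  "is_demand N \<beta> ui w p x \<longleftrightarrow> admissible N x \<and> budget N p w x \<and>
     (\<forall>y. admissible N y \<and> budget N p w y \<longrightarrow> util N \<beta> ui y \<le> util N \<beta> ui x)"

(* Marshallian demand xi_i(p) (wealth evaluated at the endowment w). *)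
definition demand ::
  "nat \<Rightarrow> real \<Rightarrow> (nat \<Rightarrow> real \<Rightarrow> real) \<Rightarrow> (nat \<Rightarrow> real) \<Rightarrow> (nat \<Rightarrow> real) \<Rightarrow> (nat \<Rightarrow> real)" where
  "demand N \<beta> ui w p = (THE x. is_demand N \<beta> ui w p x)"

definition competitive_equilibrium ::
  "nat \<Rightarrow> real \<Rightarrow> 'a set \<Rightarrow> ('a \<Rightarrow> nat \<Rightarrow> real \<Rightarrow> real) \<Rightarrow> ('a \<Rightarrow> nat \<Rightarrow> real)
   \<Rightarrow> (nat \<Rightarrow> real) \<Rightarrow> ('a \<Rightarrow> nat \<Rightarrow> real) \<Rightarrow> bool" where
  "competitive_equilibrium N \<beta> I u \<omega> p x \<longleftrightarrow>
     (\<forall>n\<in>{1..N}. 0 < p n) \<and>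
     (\<forall>i\<in>I. is_demand N \<beta> (u i) (\<omega> i) p (x i) \<and> x i = demand N \<beta> (u i) (\<omega> i) p) \<and>
     (\<forall>n\<in>{1..N}. (\<Sum>i\<in>I. x i n) = (\<Sum>i\<in>I. \<omega> i n))"

end

theory Submission
  imports Defs
begin

(* At an interior optimum, demand is characterised by the first-order conditions
   beta^k u_k'(x_k) = lambda p_k (with p_0 = 1) together with the binding budget, and strict
   concavity makes these conditions sufficient. Near the equilibrium prices, demand is therefore
   the Frisch demand x_k = (u_k')^-1 (lambda p_k / beta^k) at the multiplier lambda that balances
   the budget. Since (u_k')^-1 has derivative -r_k / u_k', net expenditure has partial derivative
   -R / lambda in lambda and x_m - omega_m - r_m in p_m. The implicit function theorem, obtained
   from the inverse function theorem for (lambda, p_m) |-> (net expenditure, p_m) and invariance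
   of domain, gives lambda' / lambda = (x_m - omega_m - r_m) / R; differentiating
   x_n = (u_n')^-1 (lambda p_n / beta^n) then yields
   dx_n / dp_m = - r_n (lambda' / lambda + [m = n] / p_n) = S(m, n) + M(m, n). *)

section \<open>Concavity, inverse functions and implicit functions\<close>

lemma DERIV_neg_imp_strict_antimono_on:
  fixes f f' :: "real \<Rightarrow> real"
  assumes "\<And>x. 0 < x \<Longrightarrow> (f has_real_derivative f' x) (at x)"
    and "\<And>x. 0 < x \<Longrightarrow> f' x < 0"
  shows "strict_antimono_on {0<..} f"
proof (rule monotone_onI)
  fix a b :: real assume "a \<in> {0<..}" "a < b"
  show "f b < f a"
  proof (rule DERIV_neg_imp_decreasing[OF \<open>a < b\<close>])
    fix x assume "a \<le> x" "x \<le> b"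
    then have "0 < x"
      using \<open>a \<in> {0<..}\<close> by simp
    then show "\<exists>y. (f has_real_derivative y) (at x) \<and> y < 0"
      using assms by blast
  qed
qed

lemma strict_antimono_on_inv_into:
  fixes f :: "'a::linorder \<Rightarrow> 'b::linorder"
  assumes f: "strict_antimono_on A f"
  shows "strict_antimono_on (f ` A) (inv_into A f)"
proof (rule monotone_onI)
  fix y y' assume "y \<in> f ` A" "y' \<in> f ` A" "y < y'"
  then obtain a a' where a: "a \<in> A" "a' \<in> A" "y = f a" "y' = f a'"
    by blast
  have "a' < a"
  proof (rule ccontr)
    assume "\<not> a' < a"
    then have "f a' \<le> f a"
      using monotone_onD[OF f \<open>a \<in> A\<close> \<open>a' \<in> A\<close>] by (cases a a' rule: linorder_cases) auto
    then show False
      using \<open>y < y'\<close> a by simp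
  qed
  moreover have "inj_on f A"
    using f strict_antimono_iff_antimono by blast
  ultimately show "inv_into A f y' < inv_into A f y"
    using a by simp
qed

lemma concave_below_tangent:
  fixes f f' :: "real \<Rightarrow> real"
  assumes f: "\<And>x. 0 < x \<Longrightarrow> (f has_real_derivative f' x) (at x)"
    and f': "strict_antimono_on {0<..} f'"
    and "0 < a" "0 < b" "a \<noteq> b"
  shows "f b < f a + f' a * (b - a)"
proof -
  have mvt: "\<exists>z>lo. z < hi \<and> f hi - f lo = (hi - lo) * f' z" if "0 < lo" "lo < hi" for lo hi
    by (rule MVT2[OF \<open>lo < hi\<close>]) (use f that in auto)
  have "\<exists>z. f b - f a = f' z * (b - a) \<and> (f' z - f' a) * (b - a) < 0"
  proof (cases "a < b")
    case True
    with mvt \<open>0 < a\<close> obtain z where "a < z" "f b - f a = (b - a) * f' z"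
      by blast
    moreover have "f' z < f' a"
      by (rule monotone_onD[OF f']) (use \<open>0 < a\<close> \<open>a < z\<close> in auto)
    ultimately show ?thesis
      using True by (intro exI[of _ z] conjI) (simp_all add: mult.commute mult_pos_neg)
  next
    case False
    with \<open>a \<noteq> b\<close> have "b < a"
      by simp
    with mvt \<open>0 < b\<close> obtain z where "b < z" "z < a" "f a - f b = (a - b) * f' z"
      by blast
    moreover have "f' a < f' z"
      by (rule monotone_onD[OF f']) (use \<open>0 < b\<close> \<open>b < z\<close> \<open>z < a\<close> in auto)
    moreover have "(f' z - f' a) * (b - a) < 0"
      using \<open>b < a\<close> \<open>f' a < f' z\<close> by (simp add: mult_pos_neg)
    ultimately show ?thesis
      by (intro exI[of _ z] conjI) (simp_all add: algebra_simps)
  qed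
  then obtain z where "f b - f a = f' z * (b - a)" "(f' z - f' a) * (b - a) < 0"
    by blast
  then show ?thesis
    by (simp add: algebra_simps)
qed

lemma has_derivative_expenditure_term:
  fixes g c :: "real \<Rightarrow> real"
  assumes g: "(g has_real_derivative - r / y) (at y)"
    and y: "y = l * c t / b" and "l \<noteq> 0" "c t \<noteq> 0" "b \<noteq> 0"
    and c: "(c has_real_derivative c') (at t)"
  shows "((\<lambda>z. c (snd z) * (g (fst z * c (snd z) / b) - w)) has_derivative
      (\<lambda>h. - (c t * r / l) * fst h + c' * (g y - w - r) * snd h)) (at (l, t))"
proof -
  have c_snd: "((\<lambda>z. c (snd z)) has_derivative (\<lambda>h. snd h * c')) (at (l, t))"
    by (rule DERIV_compose_FDERIV[where g = snd]) (use c in \<open>auto intro!: derivative_eq_intros\<close>)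
  have "((\<lambda>z. fst z * c (snd z) / b) has_derivative (\<lambda>h. (l * (snd h * c') + fst h * c t) / b)) (at (l, t))"
    using \<open>b \<noteq> 0\<close> by (auto intro!: derivative_eq_intros c_snd)
  from DERIV_compose_FDERIV[OF _ this, of g "- r / y"]
  have "((\<lambda>z. g (fst z * c (snd z) / b)) has_derivative (\<lambda>h. (l * (snd h * c') + fst h * c t) / b * (- r / y))) (at (l, t))"
    using g y by simp
  then have "((\<lambda>z. c (snd z) * (g (fst z * c (snd z) / b) - w)) has_derivative
      (\<lambda>h. c t * ((l * (snd h * c') + fst h * c t) / b * (- r / y) - 0) + snd h * c' * (g y - w))) (at (l, t))"
    using y by (auto intro!: derivative_eq_intros c_snd)
  moreover have "(\<lambda>h. c t * ((l * (snd h * c') + fst h * c t) / b * (- r / y) - 0) + snd h * c' * (g y - w))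
      = (\<lambda>h. - (c t * r / l) * fst h + c' * (g y - w - r) * snd h)"
    using assms(3-5) by (auto simp: y field_simps)
  ultimately show ?thesis
    by simp
qed

lemma has_real_derivative_fst_comp_Pair:
  fixes G :: "real \<times> real \<Rightarrow> real \<times> real"
  assumes G: "(G has_derivative G') (at (c, t))"
  shows "((\<lambda>s. fst (G (c, s))) has_real_derivative fst (G' (0, 1))) (at t)"
proof -
  have "((\<lambda>s. (c, s)) has_derivative (\<lambda>h. (0, h))) (at t)"
    by (rule has_derivative_Pair[OF has_derivative_const has_derivative_ident])
  from has_derivative_fst[OF has_derivative_compose[OF this G]]
  have "((\<lambda>s. fst (G (c, s))) has_derivative (\<lambda>h. fst (G' (0, h)))) (at t)" .
  moreover have "(\<lambda>h. fst (G' (0, h))) = (*) (fst (G' (0, 1)))"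
  proof
    fix h :: real
    have "G' (h *\<^sub>R (0, 1)) = h *\<^sub>R G' (0, 1)"
      by (rule linear_cmul[OF has_derivative_linear[OF G]])
    then show "fst (G' (0, h)) = fst (G' (0, 1)) * h"
      by (simp add: mult.commute)
  qed
  ultimately show ?thesis
    unfolding has_field_derivative_def by (rule has_derivative_eq_rhs)
qed

lemma inj_on_Pair_snd:
  assumes "\<And>l l' t. (l, t) \<in> S \<Longrightarrow> (l', t) \<in> S \<Longrightarrow> E (l, t) = E (l', t) \<Longrightarrow> l = l'"
  shows "inj_on (\<lambda>z. (E z, snd z)) S"
proof (rule inj_onI)
  fix z z' assume "z \<in> S" "z' \<in> S" "(E z, snd z) = (E z', snd z')"
  then show "z = z'"
    using assms by (cases z; cases z') auto
qed

lemma has_derivative_inv_into_Pair_snd: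
  fixes E :: "real \<times> real \<Rightarrow> real"
  assumes S: "open S" "z0 \<in> S" and contE: "continuous_on S E"
    and inj: "\<And>l l' t. (l, t) \<in> S \<Longrightarrow> (l', t) \<in> S \<Longrightarrow> E (l, t) = E (l', t) \<Longrightarrow> l = l'"
    and E': "(E has_derivative (\<lambda>h. A * fst h + B * snd h)) (at z0)" and "A \<noteq> 0"
  shows "(inv_into S (\<lambda>z. (E z, snd z)) has_derivative (\<lambda>h. ((fst h - B * snd h) / A, snd h)))
    (at (E z0, snd z0))"
proof -
  have inj_F: "inj_on (\<lambda>z. (E z, snd z)) S"
    by (rule inj_on_Pair_snd) (fact inj)
  have "continuous_on S (\<lambda>z. (E z, snd z))"
    by (intro continuous_intros contE)
  moreover have "inv_into S (\<lambda>z. (E z, snd z)) (E z, snd z) = z" if "z \<in> S" for z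
    using inv_into_f_f[OF inj_F that] by simp
  moreover have "((\<lambda>z. (E z, snd z)) has_derivative (\<lambda>h. (A * fst h + B * snd h, snd h))) (at z0)"
    by (rule has_derivative_Pair[OF E' has_derivative_snd[OF has_derivative_ident]])
  moreover have "(\<lambda>h. (A * fst h + B * snd h, snd h)) \<circ> (\<lambda>h. ((fst h - B * snd h) / A, snd h)) = id"
    using \<open>A \<noteq> 0\<close> by (simp add: fun_eq_iff)
  ultimately show ?thesis
    using has_derivative_inverse_strong[OF S, of "\<lambda>z. (E z, snd z)"] by simp
qed

lemma implicit_function_real:
  fixes E :: "real \<times> real \<Rightarrow> real"
  assumes S: "open S" "(l0, t0) \<in> S" and E0: "E (l0, t0) = 0" and contE: "continuous_on S E"
    and inj: "\<And>l l' t. (l, t) \<in> S \<Longrightarrow> (l', t) \<in> S \<Longrightarrow> E (l, t) = E (l', t) \<Longrightarrow> l = l'"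
    and E': "(E has_derivative (\<lambda>h. A * fst h + B * snd h)) (at (l0, t0))" and "A \<noteq> 0"
  obtains \<epsilon> \<Lambda> where "0 < \<epsilon>" "\<Lambda> t0 = l0" "(\<Lambda> has_real_derivative - B / A) (at t0)"
    "\<And>t. t \<in> ball t0 \<epsilon> \<Longrightarrow> (\<Lambda> t, t) \<in> S \<and> E (\<Lambda> t, t) = 0"
proof -
  define F where "F z = (E z, snd z)" for z
  define G where "G = inv_into S F"
  \<comment> \<open>By invariance of domain the local inverse \<open>G\<close> of \<open>F\<close> is defined on a ball around \<open>(0, t0)\<close>.\<close>
  have inj_F: "inj_on F S"
    unfolding F_def by (rule inj_on_Pair_snd) (fact inj)
  have "open (F ` S)"
    by (rule invariance_of_domain[OF _ S(1) inj_F]) (simp add: F_def continuous_intros contE)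
  moreover have F0: "F (l0, t0) = (0, t0)"
    by (simp add: F_def E0)
  then have "(0, t0) \<in> F ` S"
    using S(2) by (metis image_eqI)
  ultimately obtain \<epsilon> where "0 < \<epsilon>" and \<epsilon>: "ball (0, t0) \<epsilon> \<subseteq> F ` S"
    using open_contains_ball by blast
  have "(G has_derivative (\<lambda>h. ((fst h - B * snd h) / A, snd h))) (at (0, t0))"
    using has_derivative_inv_into_Pair_snd[OF S contE inj E' \<open>A \<noteq> 0\<close>] E0
    unfolding F_def G_def by simp
  from has_real_derivative_fst_comp_Pair[OF this]
  have "((\<lambda>t. fst (G (0, t))) has_real_derivative - B / A) (at t0)"
    by simp
  moreover have "(fst (G (0, t)), t) \<in> S \<and> E (fst (G (0, t)), t) = 0" if "t \<in> ball t0 \<epsilon>" for t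
  proof -
    have "(0, t) \<in> ball (0, t0) \<epsilon>"
      using that by (simp add: dist_Pair_Pair)
    with \<epsilon> have "(0, t) \<in> F ` S"
      by blast
    then have "G (0, t) \<in> S" "F (G (0, t)) = (0, t)"
      by (simp_all add: G_def inv_into_into f_inv_into_f)
    moreover from this(2) have "(fst (G (0, t)), t) = G (0, t)" "E (G (0, t)) = 0"
      by (simp_all add: F_def prod_eq_iff)
    ultimately show ?thesis
      by simp
  qed
  moreover have "fst (G (0, t0)) = l0"
    using inv_into_f_f[OF inj_F S(2)] F0 by (simp add: G_def)
  ultimately show ?thesis
    using that[of \<epsilon> "\<lambda>t. fst (G (0, t))"] \<open>0 < \<epsilon>\<close> by simp
qed

section \<open>Prices and budgets\<close>

definition price_vector :: "(nat \<Rightarrow> real) \<Rightarrow> nat \<Rightarrow> real" where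
  "price_vector p k = (if k = 0 then 1 else p k)"

lemma price_vector_0 [simp]: "price_vector p 0 = 1"
  and price_vector_nonzero [simp]: "k \<noteq> 0 \<Longrightarrow> price_vector p k = p k"
  by (simp_all add: price_vector_def)

lemma sum_price_vector:
  "(\<Sum>k=0..N. price_vector p k * f k) = f 0 + (\<Sum>k=1..N. p k * f k)"
proof -
  have "(\<Sum>k=1..N. price_vector p k * f k) = (\<Sum>k=1..N. p k * f k)"
    by (intro sum.cong) auto
  then show ?thesis
    by (simp add: sum.atLeast_Suc_atMost)
qed

lemma sum_fun_upd_arg:
  fixes g :: "'a \<Rightarrow> 'b \<Rightarrow> 'c::ab_group_add"
  assumes "finite A" "j \<in> A"
  shows "(\<Sum>k\<in>A. g k ((x(j := a)) k)) = (\<Sum>k\<in>A. g k (x k)) + (g j a - g j (x j))"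
proof -
  have "(\<Sum>k\<in>A - {j}. g k ((x(j := a)) k)) = (\<Sum>k\<in>A - {j}. g k (x k))"
    by (intro sum.cong) auto
  then show ?thesis
    using assms by (simp add: sum.remove)
qed

definition net_expenditure :: "nat \<Rightarrow> (nat \<Rightarrow> real) \<Rightarrow> (nat \<Rightarrow> real) \<Rightarrow> (nat \<Rightarrow> real) \<Rightarrow> real" where
  "net_expenditure N p w x = (\<Sum>k=0..N. price_vector p k * (x k - w k))"

lemma budget_iff_net_expenditure: "budget N p w x \<longleftrightarrow> net_expenditure N p w x \<le> 0"
  unfolding budget_def net_expenditure_def sum_price_vector
  by (simp add: right_diff_distrib sum_subtractf) linarith

lemma net_expenditure_fun_upd:
  "k \<le> N \<Longrightarrow> net_expenditure N p w (x(k := a)) = net_expenditure N p w x + price_vector p k * (a - x k)"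
  unfolding net_expenditure_def
  using sum_fun_upd_arg[of "{0..N}" k "\<lambda>k z. price_vector p k * (z - w k)" x a]
  by (simp add: algebra_simps)

lemma util_fun_upd:
  "k \<le> N \<Longrightarrow> util N \<beta> v (x(k := a)) = util N \<beta> v x + \<beta> ^ k * (v k a - v k (x k))"
  unfolding util_def
  using sum_fun_upd_arg[of "{0..N}" k "\<lambda>k z. \<beta> ^ k * v k z" x a]
  by (simp add: algebra_simps)

lemma price_vector_fun_upd_has_real_derivative:
  assumes "m \<noteq> 0"
  shows "((\<lambda>t. price_vector (p(m := t)) k) has_real_derivative (if k = m then 1 else 0)) (at t)"
proof (cases "k = m")
  case True
  then show ?thesis
    using assms by (simp add: price_vector_def)
next
  case False
  then have "(\<lambda>t. price_vector (p(m := t)) k) = (\<lambda>t. price_vector p k)"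
    by (simp add: price_vector_def)
  then show ?thesis
    using False by simp
qed

section \<open>Demand of a consumer with strictly concave separable utility\<close>

locale consumer =
  fixes N :: nat and \<beta> :: real and v v' v'' :: "nat \<Rightarrow> real \<Rightarrow> real"
  assumes beta_pos: "0 < \<beta>"
    and has_deriv_v: "\<And>k x. k \<le> N \<Longrightarrow> 0 < x \<Longrightarrow> (v k has_real_derivative v' k x) (at x)"
    and has_deriv_v': "\<And>k x. k \<le> N \<Longrightarrow> 0 < x \<Longrightarrow> (v' k has_real_derivative v'' k x) (at x)"
    and v'_pos: "\<And>k x. k \<le> N \<Longrightarrow> 0 < x \<Longrightarrow> 0 < v' k x"
    and v''_neg: "\<And>k x. k \<le> N \<Longrightarrow> 0 < x \<Longrightarrow> v'' k x < 0"
begin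

lemma v'_strict_antimono: "k \<le> N \<Longrightarrow> strict_antimono_on {0<..} (v' k)"
  by (blast intro: DERIV_neg_imp_strict_antimono_on has_deriv_v' v''_neg)

lemma util_less_of_first_order_conditions:
  assumes x: "admissible N x" and y: "admissible N y" "y \<noteq> x"
    and foc: "\<And>k. k \<le> N \<Longrightarrow> \<beta> ^ k * v' k (x k) = l * price_vector p k"
  shows "util N \<beta> v y < util N \<beta> v x + l * (net_expenditure N p w y - net_expenditure N p w x)"
proof -
  obtain j where j: "j \<le> N" "y j \<noteq> x j"
    using x y unfolding admissible_def by (metis ext not_le)
  define T where "T k = \<beta> ^ k * v k (x k) + \<beta> ^ k * v' k (x k) * (y k - x k)" for k
  have tangent: "\<beta> ^ k * v k (y k) < T k" if "k \<le> N" "y k \<noteq> x k" for k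
  proof -
    have "v k (y k) < v k (x k) + v' k (x k) * (y k - x k)"
      using that x y unfolding admissible_def
      by (intro concave_below_tangent[OF has_deriv_v v'_strict_antimono]) auto
    then have "\<beta> ^ k * v k (y k) < \<beta> ^ k * (v k (x k) + v' k (x k) * (y k - x k))"
      using beta_pos by simp
    then show ?thesis
      unfolding T_def by (simp add: distrib_left mult.assoc)
  qed
  have tangent_le: "\<beta> ^ k * v k (y k) \<le> T k" if "k \<le> N" for k
    using tangent[OF that] by (cases "y k = x k") (auto simp: T_def)
  have "util N \<beta> v y < sum T {0..N}"
    unfolding util_def
  proof (rule sum_strict_mono_ex1)
    show "\<forall>k\<in>{0..N}. \<beta> ^ k * v k (y k) \<le> T k"
      using tangent_le by simp
    show "\<exists>k\<in>{0..N}. \<beta> ^ k * v k (y k) < T k"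
      using tangent[OF j] j(1) by auto
  qed simp
  also have "sum T {0..N} = util N \<beta> v x + l * (\<Sum>k=0..N. price_vector p k * (y k - x k))"
    unfolding T_def util_def using foc
    by (simp add: sum.distrib sum_distrib_left mult.assoc)
  also have "(\<Sum>k=0..N. price_vector p k * (y k - x k))
      = net_expenditure N p w y - net_expenditure N p w x"
    unfolding net_expenditure_def by (simp add: sum_subtractf[symmetric] algebra_simps)
  finally show ?thesis .
qed

lemma first_order_conditions_imp_demand:
  assumes x: "admissible N x"
    and foc: "\<And>k. k \<le> N \<Longrightarrow> \<beta> ^ k * v' k (x k) = l * price_vector p k"
    and "0 \<le> l" and binding: "net_expenditure N p w x = 0"
  shows "is_demand N \<beta> v w p x" and "demand N \<beta> v w p = x"
proof -
  have better: "util N \<beta> v y < util N \<beta> v x" if "admissible N y" "budget N p w y" "y \<noteq> x" for y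
  proof -
    have "l * (net_expenditure N p w y - net_expenditure N p w x) \<le> 0"
      using that(2) binding \<open>0 \<le> l\<close>
      by (simp add: budget_iff_net_expenditure mult_nonneg_nonpos)
    moreover have "util N \<beta> v y < util N \<beta> v x + l * (net_expenditure N p w y - net_expenditure N p w x)"
      by (rule util_less_of_first_order_conditions[OF x that(1,3)]) (rule foc)
    ultimately show ?thesis
      by linarith
  qed
  have "budget N p w x"
    using binding by (simp add: budget_iff_net_expenditure)
  then show dem: "is_demand N \<beta> v w p x"
    unfolding is_demand_def using x better by (metis less_imp_le order_refl)
  show "demand N \<beta> v w p = x"
    unfolding demand_def
  proof (rule the_equality)
    show "is_demand N \<beta> v w p x"
      by (rule dem)
    fix y assume "is_demand N \<beta> v w p y"
    then show "y = x"
      using better[of y] dem unfolding is_demand_def by (meson not_le)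
  qed
qed

lemma is_demand_budget_binding:
  assumes dem: "is_demand N \<beta> v w p x"
  shows "net_expenditure N p w x = 0"
proof (rule ccontr)
  assume "net_expenditure N p w x \<noteq> 0"
  moreover have x: "admissible N x" and "budget N p w x"
    and max: "\<And>y. admissible N y \<Longrightarrow> budget N p w y \<Longrightarrow> util N \<beta> v y \<le> util N \<beta> v x"
    using dem unfolding is_demand_def by auto
  ultimately have s: "0 < - net_expenditure N p w x"
    by (simp add: budget_iff_net_expenditure)
  define y where "y = x(0 := x 0 - net_expenditure N p w x)"
  have "0 < x 0"
    using x unfolding admissible_def by simp
  then have "admissible N y"
    using x s unfolding admissible_def y_def by auto
  moreover have "budget N p w y"
    unfolding y_def by (simp add: budget_iff_net_expenditure net_expenditure_fun_upd)
  moreover have "v 0 (x 0) < v 0 (y 0)"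
  proof (rule DERIV_pos_imp_increasing[where f = "v 0"])
    show "x 0 < y 0"
      using s by (simp add: y_def)
    fix z assume "x 0 \<le> z"
    with \<open>0 < x 0\<close> have "0 < z"
      by simp
    then show "\<exists>d. (v 0 has_real_derivative d) (at z) \<and> 0 < d"
      using has_deriv_v v'_pos by blast
  qed
  then have "util N \<beta> v x < util N \<beta> v y"
    unfolding y_def by (simp add: util_fun_upd)
  ultimately show False
    using max by (meson not_le)
qed

lemma is_demand_exchange_le:
  assumes dem: "is_demand N \<beta> v w p x" and "0 < p k" "k \<le> N" "k \<noteq> 0"
  obtains \<delta> where "0 < \<delta>"
    "\<And>e. \<bar>e\<bar> < \<delta> \<Longrightarrow> util N \<beta> v ((x(k := x k + e))(0 := x 0 - e * p k)) \<le> util N \<beta> v x"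
proof (rule that)
  have x: "admissible N x"
    and max: "\<And>y. admissible N y \<Longrightarrow> budget N p w y \<Longrightarrow> util N \<beta> v y \<le> util N \<beta> v x"
    using dem unfolding is_demand_def by auto
  then show "0 < min (x k) (x 0 / p k)"
    using \<open>0 < p k\<close> \<open>k \<le> N\<close> unfolding admissible_def by simp
  fix e assume e: "\<bar>e\<bar> < min (x k) (x 0 / p k)"
  have "e * p k \<le> \<bar>e\<bar> * p k"
    using \<open>0 < p k\<close> by (simp add: mult_right_mono)
  also have "\<bar>e\<bar> * p k < x 0"
    using e \<open>0 < p k\<close> by (simp add: pos_less_divide_eq)
  finally have "admissible N ((x(k := x k + e))(0 := x 0 - e * p k))"
    using x e \<open>k \<noteq> 0\<close> unfolding admissible_def by auto
  moreover have "budget N p w ((x(k := x k + e))(0 := x 0 - e * p k))"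
    using is_demand_budget_binding[OF dem] \<open>k \<le> N\<close> \<open>k \<noteq> 0\<close>
    by (simp add: budget_iff_net_expenditure net_expenditure_fun_upd)
  ultimately show "util N \<beta> v ((x(k := x k + e))(0 := x 0 - e * p k)) \<le> util N \<beta> v x"
    by (rule max)
qed

lemma is_demand_first_order_conditions:
  assumes dem: "is_demand N \<beta> v w p x" and p: "\<forall>k\<in>{1..N}. 0 < p k" and "k \<le> N"
  shows "\<beta> ^ k * v' k (x k) = v' 0 (x 0) * price_vector p k"
proof (cases "k = 0")
  case False
  with p \<open>k \<le> N\<close> have "0 < p k"
    by simp
  have "0 < x 0" "0 < x k"
    using dem \<open>k \<le> N\<close> unfolding is_demand_def admissible_def by auto
  define \<phi> where "\<phi> e = \<beta> ^ k * (v k (x k + e) - v k (x k)) + (v 0 (x 0 - e * p k) - v 0 (x 0))" for e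
  obtain \<delta> where "0 < \<delta>"
    and le: "\<And>e. \<bar>e\<bar> < \<delta> \<Longrightarrow> util N \<beta> v ((x(k := x k + e))(0 := x 0 - e * p k)) \<le> util N \<beta> v x"
    using is_demand_exchange_le[OF dem \<open>0 < p k\<close> \<open>k \<le> N\<close> False] by blast
  have local_max: "\<forall>e. \<bar>0 - e\<bar> < \<delta> \<longrightarrow> \<phi> e \<le> \<phi> 0"
    using le False \<open>k \<le> N\<close> by (simp add: \<phi>_def util_fun_upd)
  have inner_k: "((\<lambda>e. x k + e) has_real_derivative 1) (at 0)"
    by (rule derivative_eq_intros | simp)+
  have dk: "((\<lambda>e. v k (x k + e)) has_real_derivative v' k (x k) * 1) (at 0)"
    by (rule DERIV_chain2[where g = "\<lambda>e. x k + e", OF _ inner_k])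
      (use has_deriv_v \<open>k \<le> N\<close> \<open>0 < x k\<close> in simp)
  have inner_0: "((\<lambda>e. x 0 - e * p k) has_real_derivative - p k) (at 0)"
    by (rule derivative_eq_intros | simp)+
  have d0: "((\<lambda>e. v 0 (x 0 - e * p k)) has_real_derivative v' 0 (x 0) * (- p k)) (at 0)"
    by (rule DERIV_chain2[where g = "\<lambda>e. x 0 - e * p k", OF _ inner_0])
      (use has_deriv_v \<open>0 < x 0\<close> in simp)
  have "(\<phi> has_real_derivative \<beta> ^ k * (v' k (x k) * 1 - 0) + (v' 0 (x 0) * (- p k) - 0)) (at 0)"
    unfolding \<phi>_def by (intro DERIV_add DERIV_cmult DERIV_diff dk d0 DERIV_const)
  then have "\<beta> ^ k * (v' k (x k) * 1 - 0) + (v' 0 (x 0) * (- p k) - 0) = 0"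
    using \<open>0 < \<delta>\<close> local_max by (rule DERIV_local_max)
  then show ?thesis
    using False by simp
qed simp

definition risk_tolerance :: "nat \<Rightarrow> real \<Rightarrow> real" where
  "risk_tolerance k x = v' k x / - v'' k x"

lemma risk_tolerance_pos: "k \<le> N \<Longrightarrow> 0 < x \<Longrightarrow> 0 < risk_tolerance k x"
  unfolding risk_tolerance_def using v'_pos v''_neg by (intro divide_pos_pos) auto

lemma inj_on_v': "k \<le> N \<Longrightarrow> inj_on (v' k) {0<..}"
  using v'_strict_antimono strict_antimono_iff_antimono by blast

lemma open_image_v': "k \<le> N \<Longrightarrow> open (v' k ` {0<..})"
proof (rule invariance_of_domain[OF _ _ inj_on_v'])
  show "continuous_on {0<..} (v' k)" if "k \<le> N"
    using has_deriv_v'[OF that] by (meson DERIV_isCont continuous_at_imp_continuous_on greaterThan_iff)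
qed auto

lemma inv_v'_has_real_derivative:
  assumes "k \<le> N" "0 < x"
  shows "(inv_into {0<..} (v' k) has_real_derivative - risk_tolerance k x / v' k x) (at (v' k x))"
proof -
  have "v'' k x \<noteq> 0"
    using v''_neg assms by (metis less_irrefl)
  have "(inv_into {0<..} (v' k) has_derivative (*) (inverse (v'' k x))) (at (v' k x))"
  proof (rule has_derivative_inverse_on[where S = "{0<..}" and f = "v' k" and x = x and f' = "\<lambda>x. (*) (v'' k x)"])
    fix z :: real assume "z \<in> {0<..}"
    then show "(v' k has_derivative (*) (v'' k z)) (at z)"
      using has_deriv_v' \<open>k \<le> N\<close> by (simp add: has_field_derivative_def)
    show "inv_into {0<..} (v' k) (v' k z) = z"
      using inj_on_v' \<open>k \<le> N\<close> \<open>z \<in> {0<..}\<close> by simp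
  next
    show "(*) (v'' k x) \<circ> (*) (inverse (v'' k x)) = id"
      using \<open>v'' k x \<noteq> 0\<close> by (simp add: fun_eq_iff)
  qed (use assms in simp_all)
  moreover have "inverse (v'' k x) = - risk_tolerance k x / v' k x"
    using v'_pos[OF assms] \<open>v'' k x \<noteq> 0\<close> by (simp add: risk_tolerance_def field_simps)
  ultimately show ?thesis
    by (simp add: has_field_derivative_def)
qed

text \<open>Frisch demand: the solution of the first-order conditions for a prescribed marginal
  utility of wealth \<open>l\<close>.\<close>

definition frisch_demand :: "real \<Rightarrow> (nat \<Rightarrow> real) \<Rightarrow> nat \<Rightarrow> real" where
  "frisch_demand l p k = (if k \<le> N then inv_into {0<..} (v' k) (l * price_vector p k / \<beta> ^ k) else 0)"

definition foc_solvable :: "real \<Rightarrow> (nat \<Rightarrow> real) \<Rightarrow> bool" where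
  "foc_solvable l p \<longleftrightarrow> (\<forall>k\<le>N. l * price_vector p k / \<beta> ^ k \<in> v' k ` {0<..})"

lemma frisch_demand_pos:
  assumes "foc_solvable l p" "k \<le> N"
  shows "0 < frisch_demand l p k"
proof -
  have "l * price_vector p k / \<beta> ^ k \<in> v' k ` {0<..}"
    using assms unfolding foc_solvable_def by blast
  from inv_into_into[OF this] show ?thesis
    using assms(2) by (simp add: frisch_demand_def)
qed

lemma v'_frisch_demand:
  "foc_solvable l p \<Longrightarrow> k \<le> N \<Longrightarrow> v' k (frisch_demand l p k) = l * price_vector p k / \<beta> ^ k"
  unfolding foc_solvable_def frisch_demand_def by (simp add: f_inv_into_f)

lemma foc_solvable_multiplier_pos:
  assumes "foc_solvable l p"
  shows "0 < l"
  using v'_frisch_demand[OF assms, of 0] v'_pos[of 0] frisch_demand_pos[OF assms, of 0] by force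

lemma demand_eq_frisch_demand:
  assumes l: "foc_solvable l p" and binding: "net_expenditure N p w (frisch_demand l p) = 0"
  shows "demand N \<beta> v w p = frisch_demand l p"
proof (rule first_order_conditions_imp_demand(2)[OF _ _ _ binding])
  show "admissible N (frisch_demand l p)"
    using frisch_demand_pos[OF l] unfolding admissible_def by (simp add: frisch_demand_def)
  show "\<beta> ^ k * v' k (frisch_demand l p k) = l * price_vector p k" if "k \<le> N" for k
    using v'_frisch_demand[OF l that] beta_pos by simp
  show "0 \<le> l"
    using foc_solvable_multiplier_pos[OF l] by simp
qed

lemma is_demand_eq_frisch_demand:
  assumes dem: "is_demand N \<beta> v w p x" and p: "\<forall>k\<in>{1..N}. 0 < p k"
  shows "foc_solvable (v' 0 (x 0)) p" and "frisch_demand (v' 0 (x 0)) p = x"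
proof -
  have x: "admissible N x"
    using dem unfolding is_demand_def by simp
  have v'_x: "v' 0 (x 0) * price_vector p k / \<beta> ^ k = v' k (x k)" if "k \<le> N" for k
    using is_demand_first_order_conditions[OF dem p that] beta_pos by (simp add: field_simps)
  then show "foc_solvable (v' 0 (x 0)) p"
    using x unfolding foc_solvable_def admissible_def by auto
  show "frisch_demand (v' 0 (x 0)) p = x"
  proof
    fix k
    show "frisch_demand (v' 0 (x 0)) p k = x k"
    proof (cases "k \<le> N")
      case True
      then show ?thesis
        using x v'_x[OF True] inj_on_v'[OF True] unfolding frisch_demand_def admissible_def by simp
    next
      case False
      then show ?thesis
        using x unfolding frisch_demand_def admissible_def by simp
    qed
  qed
qed

lemma net_expenditure_frisch_has_derivative:
  assumes l: "foc_solvable l (p(m := t))" and m: "m \<in> {1..N}"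
  defines "X \<equiv> frisch_demand l (p(m := t))"
  shows "((\<lambda>z. net_expenditure N (p(m := snd z)) w (frisch_demand (fst z) (p(m := snd z))))
    has_derivative (\<lambda>h. - (\<Sum>k=0..N. price_vector (p(m := t)) k * risk_tolerance k (X k)) / l * fst h
      + (X m - w m - risk_tolerance m (X m)) * snd h)) (at (l, t))"
proof -
  let ?c = "\<lambda>k t. price_vector (p(m := t)) k"
  let ?r = "\<lambda>k. risk_tolerance k (X k)"
  have "0 < l"
    using foc_solvable_multiplier_pos[OF l] .
  have summand: "((\<lambda>z. ?c k (snd z) * (inv_into {0<..} (v' k) (fst z * ?c k (snd z) / \<beta> ^ k) - w k))
      has_derivative (\<lambda>h. - (?c k t * ?r k / l) * fst h
        + (if k = m then 1 else 0) * (X k - w k - ?r k) * snd h)) (at (l, t))" if "k \<le> N" for k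
  proof -
    have X: "0 < X k" "v' k (X k) = l * ?c k t / \<beta> ^ k"
      unfolding X_def using frisch_demand_pos[OF l that] v'_frisch_demand[OF l that] by simp_all
    then have "?c k t \<noteq> 0"
      using v'_pos[OF that] \<open>0 < l\<close> by fastforce
    moreover have "inv_into {0<..} (v' k) (v' k (X k)) = X k"
      using inj_on_v'[OF that] X(1) by simp
    ultimately show ?thesis
      using has_derivative_expenditure_term[OF inv_v'_has_real_derivative[OF that X(1)] X(2)
          _ _ _ price_vector_fun_upd_has_real_derivative, of "w k"] \<open>0 < l\<close> beta_pos m
      by simp
  qed
  have fun_eq: "(\<lambda>z. net_expenditure N (p(m := snd z)) w (frisch_demand (fst z) (p(m := snd z))))
      = (\<lambda>z. \<Sum>k=0..N. ?c k (snd z) * (inv_into {0<..} (v' k) (fst z * ?c k (snd z) / \<beta> ^ k) - w k))"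
    unfolding net_expenditure_def frisch_demand_def by (intro ext sum.cong) auto
  have deriv_eq: "(\<lambda>h. \<Sum>k=0..N. - (?c k t * ?r k / l) * fst h + (if k = m then 1 else 0) * (X k - w k - ?r k) * snd h)
      = (\<lambda>h. - (\<Sum>k=0..N. ?c k t * ?r k) / l * fst h + (X m - w m - ?r m) * snd h)"
    using m by (simp add: fun_eq_iff sum_subtractf sum_distrib_right sum_divide_distrib
        if_distrib[of "\<lambda>u. u * _"] sum.delta cong: if_cong)
  show ?thesis
    unfolding fun_eq deriv_eq[symmetric] by (rule has_derivative_sum) (rule summand, simp)
qed

lemma net_expenditure_frisch_strict_decreasing:
  assumes l: "foc_solvable l p" and l': "foc_solvable l' p" and "l < l'"
  shows "net_expenditure N p w (frisch_demand l' p) < net_expenditure N p w (frisch_demand l p)"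
  unfolding net_expenditure_def
proof (rule sum_strict_mono)
  fix k assume "k \<in> {0..N}"
  then have "k \<le> N"
    by simp
  have "0 < l * price_vector p k / \<beta> ^ k"
    using v'_frisch_demand[OF l \<open>k \<le> N\<close>] v'_pos[OF \<open>k \<le> N\<close> frisch_demand_pos[OF l \<open>k \<le> N\<close>]] by simp
  then have c: "0 < price_vector p k"
    using foc_solvable_multiplier_pos[OF l] beta_pos by (simp add: zero_less_divide_iff zero_less_mult_iff)
  then have "l * price_vector p k / \<beta> ^ k < l' * price_vector p k / \<beta> ^ k"
    using \<open>l < l'\<close> beta_pos by (simp add: divide_strict_right_mono)
  then have "inv_into {0<..} (v' k) (l' * price_vector p k / \<beta> ^ k)
      < inv_into {0<..} (v' k) (l * price_vector p k / \<beta> ^ k)"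
    by (rule monotone_onD[OF strict_antimono_on_inv_into[OF v'_strict_antimono[OF \<open>k \<le> N\<close>]], rotated 2])
      (use l l' \<open>k \<le> N\<close> in \<open>simp_all add: foc_solvable_def\<close>)
  then have "frisch_demand l' p k < frisch_demand l p k"
    using \<open>k \<le> N\<close> by (simp add: frisch_demand_def)
  with c show "price_vector p k * (frisch_demand l' p k - w k) < price_vector p k * (frisch_demand l p k - w k)"
    by simp
qed auto

lemma net_expenditure_frisch_inj:
  assumes "foc_solvable l p" "foc_solvable l' p"
    and "net_expenditure N p w (frisch_demand l p) = net_expenditure N p w (frisch_demand l' p)"
  shows "l = l'"
  using net_expenditure_frisch_strict_decreasing[OF assms(1,2), of w]
    net_expenditure_frisch_strict_decreasing[OF assms(2,1), of w] assms(3)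
  by (cases l l' rule: linorder_cases) simp_all

lemma price_weighted_risk_tolerance_pos:
  assumes dem: "is_demand N \<beta> v w p x" and p: "\<forall>k\<in>{1..N}. 0 < p k"
  shows "0 < (\<Sum>k=0..N. price_vector p k * risk_tolerance k (x k))"
proof (intro sum_pos mult_pos_pos)
  fix k assume "k \<in> {0..N}"
  then show "0 < price_vector p k" "0 < risk_tolerance k (x k)"
    using p dem risk_tolerance_pos unfolding is_demand_def admissible_def
    by (cases "k = 0", auto)
qed auto

lemma open_foc_solvable_price_path: "open {z. foc_solvable (fst z) (p(m := snd z))}"
proof -
  have "{z. foc_solvable (fst z) (p(m := snd z))}
      = (\<Inter>k\<in>{..N}. (\<lambda>z. fst z * price_vector (p(m := snd z)) k / \<beta> ^ k) -` (v' k ` {0<..}))"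
    by (auto simp: foc_solvable_def)
  also have "open \<dots>"
  proof (intro open_INT ballI continuous_open_vimage open_image_v' allI)
    fix k z assume "k \<in> {..N}"
    show "isCont (\<lambda>z. fst z * price_vector (p(m := snd z)) k / \<beta> ^ k) z"
      using beta_pos by (cases "k = 0"; cases "k = m") (auto simp: price_vector_def intro!: continuous_intros)
  qed auto
  finally show ?thesis .
qed

lemma continuous_on_net_expenditure_frisch:
  assumes "m \<in> {1..N}"
  shows "continuous_on {z. foc_solvable (fst z) (p(m := snd z))}
    (\<lambda>z. net_expenditure N (p(m := snd z)) w (frisch_demand (fst z) (p(m := snd z))))"
proof (rule continuous_at_imp_continuous_on, rule ballI)
  fix z :: "real \<times> real"
  assume "z \<in> {z. foc_solvable (fst z) (p(m := snd z))}"
  then have "foc_solvable (fst z) (p(m := snd z))"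
    by simp
  from net_expenditure_frisch_has_derivative[OF this assms, of w]
  have "isCont (\<lambda>z. net_expenditure N (p(m := snd z)) w (frisch_demand (fst z) (p(m := snd z)))) (fst z, snd z)"
    by (rule has_derivative_continuous)
  then show "isCont (\<lambda>z. net_expenditure N (p(m := snd z)) w (frisch_demand (fst z) (p(m := snd z)))) z"
    by simp
qed

lemma demand_near_eq_frisch_demand:
  assumes dem: "is_demand N \<beta> v w p x" and p: "\<forall>k\<in>{1..N}. 0 < p k" and m: "m \<in> {1..N}"
  defines "R \<equiv> \<Sum>k=0..N. price_vector p k * risk_tolerance k (x k)"
  obtains \<epsilon> \<Lambda> where "0 < \<epsilon>" "\<Lambda> (p m) = v' 0 (x 0)"
    "(\<Lambda> has_real_derivative v' 0 (x 0) * (x m - w m - risk_tolerance m (x m)) / R) (at (p m))"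
    "\<And>t. t \<in> ball (p m) \<epsilon> \<Longrightarrow> demand N \<beta> v w (p(m := t)) = frisch_demand (\<Lambda> t) (p(m := t))"
proof -
  define E where "E z = net_expenditure N (p(m := snd z)) w (frisch_demand (fst z) (p(m := snd z)))" for z
  define S where "S = {z. foc_solvable (fst z) (p(m := snd z))}"
  let ?l0 = "v' 0 (x 0)" and ?B = "x m - w m - risk_tolerance m (x m)"
  have x: "foc_solvable ?l0 p" "frisch_demand ?l0 p = x"
    using is_demand_eq_frisch_demand[OF dem p] by simp_all
  then have l0: "0 < ?l0" "(?l0, p m) \<in> S"
    by (simp_all add: S_def foc_solvable_multiplier_pos)
  have E0: "E (?l0, p m) = 0"
    using is_demand_budget_binding[OF dem] x by (simp add: E_def)
  have E': "(E has_derivative (\<lambda>h. - R / ?l0 * fst h + ?B * snd h)) (at (?l0, p m))"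
    using net_expenditure_frisch_has_derivative[of ?l0 p m "p m" w] x m
    unfolding E_def R_def by simp
  have "open S"
    unfolding S_def by (rule open_foc_solvable_price_path)
  have "continuous_on S E"
    unfolding S_def E_def by (rule continuous_on_net_expenditure_frisch[OF m])
  have inj: "l = l'" if "(l, t) \<in> S" "(l', t) \<in> S" "E (l, t) = E (l', t)" for l l' t
    using net_expenditure_frisch_inj[of l "p(m := t)" l' w] that unfolding S_def E_def by simp
  have "0 < R"
    unfolding R_def by (rule price_weighted_risk_tolerance_pos[OF dem p])
  have A: "- R / ?l0 \<noteq> 0"
    using l0(1) \<open>0 < R\<close> by simp
  obtain \<epsilon> \<Lambda> where "0 < \<epsilon>" "\<Lambda> (p m) = ?l0"
    and \<Lambda>': "(\<Lambda> has_real_derivative - ?B / (- R / ?l0)) (at (p m))"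
    and \<Lambda>: "\<And>t. t \<in> ball (p m) \<epsilon> \<Longrightarrow> (\<Lambda> t, t) \<in> S \<and> E (\<Lambda> t, t) = 0"
    by (rule implicit_function_real[OF \<open>open S\<close> l0(2) E0 \<open>continuous_on S E\<close> _ E' A]) (use inj in blast)+
  moreover have "- ?B / (- R / ?l0) = ?l0 * ?B / R"
    using l0(1) \<open>0 < R\<close> by (simp add: field_simps)
  moreover have "demand N \<beta> v w (p(m := t)) = frisch_demand (\<Lambda> t) (p(m := t))" if "t \<in> ball (p m) \<epsilon>" for t
    using \<Lambda>[OF that] demand_eq_frisch_demand unfolding S_def E_def by simp
  ultimately show ?thesis
    using that by simp
qed

lemma frisch_demand_has_real_derivative:
  assumes l: "foc_solvable (\<Lambda> t) (p(m := t))" and \<Lambda>': "(\<Lambda> has_real_derivative \<Lambda>') (at t)"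
    and "m \<noteq> 0" and n: "n \<in> {1..N}"
  shows "((\<lambda>s. frisch_demand (\<Lambda> s) (p(m := s)) n) has_real_derivative
    - risk_tolerance n (frisch_demand (\<Lambda> t) (p(m := t)) n) * (\<Lambda>' / \<Lambda> t + (if n = m then 1 / t else 0))) (at t)"
proof -
  let ?c = "\<lambda>s. price_vector (p(m := s)) n" and ?X = "frisch_demand (\<Lambda> t) (p(m := t)) n"
  have "n \<le> N" "n \<noteq> 0"
    using n by auto
  have X: "0 < ?X" "v' n ?X = \<Lambda> t * ?c t / \<beta> ^ n"
    using frisch_demand_pos[OF l \<open>n \<le> N\<close>] v'_frisch_demand[OF l \<open>n \<le> N\<close>] by simp_all
  have "0 < \<Lambda> t"
    using foc_solvable_multiplier_pos[OF l] .
  have "?c t \<noteq> 0"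
    using X v'_pos[OF \<open>n \<le> N\<close> X(1)] by auto
  have "((\<lambda>s. \<Lambda> s * ?c s / \<beta> ^ n) has_real_derivative (\<Lambda>' * ?c t + (if n = m then 1 else 0) * \<Lambda> t) / \<beta> ^ n) (at t)"
    by (intro DERIV_cdivide DERIV_mult \<Lambda>' price_vector_fun_upd_has_real_derivative \<open>m \<noteq> 0\<close>)
  moreover have "(inv_into {0<..} (v' n) has_real_derivative - risk_tolerance n ?X / v' n ?X) (at (\<Lambda> t * ?c t / \<beta> ^ n))"
    using inv_v'_has_real_derivative[OF \<open>n \<le> N\<close> X(1)] X(2) by simp
  ultimately have "((\<lambda>s. inv_into {0<..} (v' n) (\<Lambda> s * ?c s / \<beta> ^ n)) has_real_derivative
      - risk_tolerance n ?X / v' n ?X * ((\<Lambda>' * ?c t + (if n = m then 1 else 0) * \<Lambda> t) / \<beta> ^ n)) (at t)"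
    by (rule DERIV_chain2[rotated])
  moreover have "- risk_tolerance n ?X / v' n ?X * ((\<Lambda>' * ?c t + (if n = m then 1 else 0) * \<Lambda> t) / \<beta> ^ n)
      = - risk_tolerance n ?X * (\<Lambda>' / \<Lambda> t + (if n = m then 1 / t else 0))"
    unfolding X(2) using \<open>?c t \<noteq> 0\<close> \<open>0 < \<Lambda> t\<close> \<open>m \<noteq> 0\<close> beta_pos
    by (cases "n = m") (simp_all add: field_simps)
  ultimately show ?thesis
    using \<open>n \<le> N\<close> by (simp add: frisch_demand_def)
qed

lemma demand_has_price_derivative:
  assumes dem: "is_demand N \<beta> v w p x" and p: "\<forall>k\<in>{1..N}. 0 < p k"
    and m: "m \<in> {1..N}" and n: "n \<in> {1..N}"
  defines "r \<equiv> \<lambda>k. risk_tolerance k (x k)"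
  defines "R \<equiv> \<Sum>k=0..N. price_vector p k * r k"
  shows "((\<lambda>t. demand N \<beta> v w (p(m := t)) n) has_real_derivative
    r m * r n / R - (if m = n then r n / p n else 0) + r n / R * (w m - x m)) (at (p m))"
proof -
  let ?l0 = "v' 0 (x 0)"
  obtain \<epsilon> \<Lambda> where "0 < \<epsilon>" and \<Lambda>0: "\<Lambda> (p m) = ?l0"
    and \<Lambda>': "(\<Lambda> has_real_derivative ?l0 * (x m - w m - r m) / R) (at (p m))"
    and near: "\<And>t. t \<in> ball (p m) \<epsilon> \<Longrightarrow> demand N \<beta> v w (p(m := t)) = frisch_demand (\<Lambda> t) (p(m := t))"
    using demand_near_eq_frisch_demand[OF dem p m, of thesis] unfolding r_def R_def by blast
  have x: "foc_solvable (\<Lambda> (p m)) (p(m := p m))" "frisch_demand (\<Lambda> (p m)) (p(m := p m)) = x"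
    using is_demand_eq_frisch_demand[OF dem p] \<Lambda>0 by simp_all
  have "0 < ?l0" "0 < R"
    using foc_solvable_multiplier_pos x \<Lambda>0 price_weighted_risk_tolerance_pos[OF dem p]
    unfolding R_def r_def by auto
  have "((\<lambda>t. frisch_demand (\<Lambda> t) (p(m := t)) n) has_real_derivative
      - r n * (?l0 * (x m - w m - r m) / R / ?l0 + (if n = m then 1 / p m else 0))) (at (p m))"
    using frisch_demand_has_real_derivative[OF x(1) \<Lambda>' _ n] m x(2) \<Lambda>0 unfolding r_def by simp
  then have "((\<lambda>t. demand N \<beta> v w (p(m := t)) n) has_real_derivative
      - r n * (?l0 * (x m - w m - r m) / R / ?l0 + (if n = m then 1 / p m else 0))) (at (p m))"
    by (rule has_field_derivative_transform_within_open[where S = "ball (p m) \<epsilon>"])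
      (use \<open>0 < \<epsilon>\<close> near in simp_all)
  moreover have "- r n * (?l0 * (x m - w m - r m) / R / ?l0 + (if n = m then 1 / p m else 0))
      = r m * r n / R - (if m = n then r n / p n else 0) + r n / R * (w m - x m)"
    using \<open>0 < ?l0\<close> \<open>0 < R\<close> by (cases "m = n") (simp_all add: field_simps)
  ultimately show ?thesis
    by simp
qed

end

theorem lemma2:
  fixes I :: "'a set" and N :: nat and \<beta> :: real
    and u u' u'' :: "'a \<Rightarrow> nat \<Rightarrow> real \<Rightarrow> real"
    and \<omega> :: "'a \<Rightarrow> nat \<Rightarrow> real"
    and pb :: "nat \<Rightarrow> real" and xb :: "'a \<Rightarrow> nat \<Rightarrow> real"
  assumes fin: "finite I"
    and beta: "0 < \<beta>" "\<beta> < 1"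
    and endow: "\<forall>i\<in>I. \<forall>n\<le>N. 0 \<le> \<omega> i n"
    and d1: "\<forall>i\<in>I. \<forall>n\<le>N. \<forall>x>0. (u i n has_real_derivative u' i n x) (at x)"
    and d2: "\<forall>i\<in>I. \<forall>n\<le>N. \<forall>x>0. (u' i n has_real_derivative u'' i n x) (at x)"
    and c2: "\<forall>i\<in>I. \<forall>n\<le>N. continuous_on {0<..} (u'' i n)"
    and pos: "\<forall>i\<in>I. \<forall>n\<le>N. \<forall>x>0. u' i n x > 0"
    and conc: "\<forall>i\<in>I. \<forall>n\<le>N. \<forall>x>0. u'' i n x < 0"
    and inada: "\<forall>i\<in>I. \<forall>n\<le>N. filterlim (u' i n) at_top (at_right 0)"
    and eq: "competitive_equilibrium N \<beta> I u \<omega> pb xb"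
  shows "\<forall>i\<in>I. \<forall>m\<in>{1..N}. \<forall>n\<in>{1..N}.
    (let r = (\<lambda>k. u' i k (xb i k) / (- u'' i k (xb i k)));
         R = r 0 + (\<Sum>k=1..N. pb k * r k);
         S = r m * r n / R - (if m = n then r n / pb n else 0);
         M = r n / R * (\<omega> i m - xb i m)
     in ((\<lambda>t. demand N \<beta> (u i) (\<omega> i) (pb(m := t)) n) has_real_derivative (S + M)) (at (pb m)))"
proof (intro ballI)
  fix i m n assume i: "i \<in> I" and m: "m \<in> {1..N}" and n: "n \<in> {1..N}"
  interpret consumer N \<beta> "u i" "u' i" "u'' i"
    using beta(1) d1 d2 pos conc i by unfold_locales auto
  have p: "\<forall>k\<in>{1..N}. 0 < pb k" and dem: "is_demand N \<beta> (u i) (\<omega> i) pb (xb i)"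
    using eq i unfolding competitive_equilibrium_def by auto
  show "let r = (\<lambda>k. u' i k (xb i k) / (- u'' i k (xb i k)));
         R = r 0 + (\<Sum>k=1..N. pb k * r k);
         S = r m * r n / R - (if m = n then r n / pb n else 0);
         M = r n / R * (\<omega> i m - xb i m)
     in ((\<lambda>t. demand N \<beta> (u i) (\<omega> i) (pb(m := t)) n) has_real_derivative (S + M)) (at (pb m))"
    using demand_has_price_derivative[OF dem p m n]
    unfolding Let_def risk_tolerance_def sum_price_vector by simp
qed

end
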